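(* Let $n=2N$ or $n=2N+1$ and let $V=\mathbb{C}^n$ with basis $e_{\pm1},\dots,e_{\pm N}$ (together with an extra basis vector $e_0$ when $n=2N+1$), equipped with the nondegenerate symmetric bilinear form $B$ given by $B(e_\alpha,e_{-\alpha})=1$ for $\alpha=1,\dots,N$, $B(e_0,e_0)=1$ (when $n$ is odd), and all other pairings of basis vectors equal to $0$. Let $O(n)$ be the orthogonal group of $B$, let $\mathfrak h$ be the Cartan subalgebra of $\mathfrak{so}(n)$ consisting of the operators acting by $x_\alpha$ on $e_\alpha$, by $-x_\alpha$ on $e_{-\alpha}$ ($\alpha=1,\dots,N$) and by $0$ on $e_0$, and let $\mathrm N_{O(n)}(\mathfrak h)=\{g\in O(n): g\mathfrak h g^{-1}=\mathfrak h\}$. For a subset $\{a_1,\dots,a_l\}\subseteq\{1,\dots,N\}$ of $l$ distinct indices (read cyclically, $a_{l+1}=a_1$) and $\lambda\in\mathbb C^\times$, define: - $[l,\lambda]_+$ to be the operator with $e_{-a_i}\mapsto e^{i\pi(l-1)/l}\lambda\, e_{-a_{i+1}}$ and $e_{a_i}\mapsto e^{-i\pi(l-1)/l}\lambda^{-1}\, e_{a_{i+1}}$ for $i=1,\dots,l$, and identity on all other basis vectors; - $[l]_-$ to be the operator with $e_{a_1}\mapsto e_{a_2}\mapsto\dots\mapsto e_{a_l}\mapsto e_{-a_1}\mapsto e_{-a_2}\mapsto\dots\mapsto e_{-a_l}\mapsto e_{a_1}$, and identity on all other basis vectors; - for $n$ odd and $\epsilon\in\{\pm1\}$, $[\epsilon]$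 to be the operator $e_0\mapsto\epsilon e_0$, identity on all other basis vectors. Then every $g\in \mathrm N_{O(2N)}(\mathfrak h)$ is conjugate in $\mathrm N_{O(2N)}(\mathfrak h)$ to a product $\prod_{j=1}^K[l_j,\lambda_j]_+\cdot\prod_{j=1}^{K'}[l'_j]_-$ of such operators supported on pairwise disjoint index sets which together partition $\{1,\dots,N\}$ (so $\sum_j l_j+\sum_j l'_j=N$), for some $K,K'\ge0$, lengths $l_j,l'_j\ge1$ and $\lambda_j\in\mathbb C^\times$; and every $g\in \mathrm N_{O(2N+1)}(\mathfrak h)$ is conjugate in $\mathrm N_{O(2N+1)}(\mathfrak h)$ to a product $[\epsilon]\cdot\prod_{j=1}^K[l_j,\lambda_j]_+\cdot\prod_{j=1}^{K'}[l'_j]_-$ of the same form with some $\epsilon\in\{\pm1\}$.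
   Context: $\mathrm N_{O(2N)}(\mathfrak h)\cong S_N\ltimes(\mathbb Z/2\mathbb Z)^N\ltimes(\mathbb C^\times)^N$, where $S_N$ permutes the indices simultaneously on $e_\alpha$ and $e_{-\alpha}$, the $\alpha$-th factor $\mathbb Z/2\mathbb Z$ swaps $e_\alpha\leftrightarrow e_{-\alpha}$, and $(\lambda_\alpha)\in(\mathbb C^\times)^N$ acts by $e_\alpha\mapsto\lambda_\alpha e_\alpha$, $e_{-\alpha}\mapsto\lambda_\alpha^{-1}e_{-\alpha}$; and $\mathrm N_{O(2N+1)}(\mathfrak h)=\mathrm N_{O(2N)}(\mathfrak h)\times\mathbb Z/2\mathbb Z$, the last factor acting by $e_0\mapsto -e_0$. *)

theory Defs
  imports Complex_Main
begin

text \<open>Matrices on V = C^n are functions int => int => complex, entry (r,c) being the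
 coefficient of e_r in the image of e_c. Basis indices: -N..N without 0 (n = 2N, od = False)
 or with 0 (n = 2N+1, od = True).\<close>

type_synonym cmat = "int \<Rightarrow> int \<Rightarrow> complex"

definition idx :: "nat \<Rightarrow> bool \<Rightarrow> int set" where
  "idx N od = {- int N .. int N} - (if od then {} else {0})"

definition Mat :: "nat \<Rightarrow> bool \<Rightarrow> cmat set" where
  "Mat N od = {A. \<forall>i j. (i \<notin> idx N od \<or> j \<notin> idx N od) \<longrightarrow> A i j = 0}"

definition mmul :: "nat \<Rightarrow> bool \<Rightarrow> cmat \<Rightarrow> cmat \<Rightarrow> cmat" where
  "mmul N od A C = (\<lambda>i j. \<Sum>k\<in>idx N od. A i k * C k j)"

definition Imat :: "nat \<Rightarrow> bool \<Rightarrow> cmat" where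
  "Imat N od = (\<lambda>i j. if i \<in> idx N od \<and> i = j then 1 else 0)"

definition Bmat :: "nat \<Rightarrow> bool \<Rightarrow> cmat" where
  "Bmat N od = (\<lambda>i j. if i \<in> idx N od \<and> j \<in> idx N od \<and> i = - j then 1 else 0)"

definition is_inv :: "nat \<Rightarrow> bool \<Rightarrow> cmat \<Rightarrow> cmat \<Rightarrow> bool" where
  "is_inv N od A A' \<longleftrightarrow> A' \<in> Mat N od \<and> mmul N od A A' = Imat N od \<and> mmul N od A' A = Imat N od"

definition Orth :: "nat \<Rightarrow> bool \<Rightarrow> cmat set" where
  "Orth N od = {g \<in> Mat N od. (\<exists>g'. is_inv N od g g') \<and>
     (\<forall>i\<in>idx N od. \<forall>j\<in>idx N od.
        (\<Sum>k\<in>idx N od. \<Sum>m\<in>idx N od. g k i * Bmat N od k m * g m j) = Bmat N od i j)}"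

definition hset :: "nat \<Rightarrow> bool \<Rightarrow> cmat set" where
  "hset N od = {A. \<exists>x :: int \<Rightarrow> complex. (\<forall>a. x (- a) = - x a) \<and>
      A = (\<lambda>i j. if i \<in> idx N od \<and> j = i then x i else 0)}"

definition NormO :: "nat \<Rightarrow> bool \<Rightarrow> cmat set" where
  "NormO N od = {g \<in> Orth N od. \<exists>g'. is_inv N od g g' \<and>
      (\<lambda>H. mmul N od (mmul N od g H) g') ` hset N od = hset N od}"

definition conj_in_Norm :: "nat \<Rightarrow> bool \<Rightarrow> cmat \<Rightarrow> cmat \<Rightarrow> bool" where
  "conj_in_Norm N od g t \<longleftrightarrow> (\<exists>h h'. h \<in> NormO N od \<and> is_inv N od h h' \<and>
      mmul N od (mmul N od h g) h' = t)"

text \<open>Monomial operator: basis vector e_c is sent to fst (f c) * e_{snd (f c)}.\<close>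
definition basis_op :: "nat \<Rightarrow> bool \<Rightarrow> (int \<Rightarrow> complex \<times> int) \<Rightarrow> cmat" where
  "basis_op N od f = (\<lambda>r c. if r \<in> idx N od \<and> c \<in> idx N od \<and> r = snd (f c) then fst (f c) else 0)"

text \<open>Cyclic successor within the list [a_1,...,a_l] (a_{l+1} = a_1).\<close>
definition succ_in :: "int list \<Rightarrow> int \<Rightarrow> int" where
  "succ_in as a = the (map_of (zip as (rotate1 as)) a)"

definition plus_op :: "nat \<Rightarrow> bool \<Rightarrow> int list \<Rightarrow> complex \<Rightarrow> cmat" where
  "plus_op N od as c = basis_op N od (\<lambda>v.
     let l = real (length as) in
     if - v \<in> set as then (exp (\<i> * complex_of_real (pi * (l - 1) / l)) * c, - succ_in as (- v))
     else if v \<in> set as then (exp (- \<i> * complex_of_real (pi * (l - 1) / l)) * inverse c, succ_in as v)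
     else (1, v))"

definition minus_op :: "nat \<Rightarrow> bool \<Rightarrow> int list \<Rightarrow> cmat" where
  "minus_op N od as = basis_op N od (\<lambda>v.
     if v \<in> set as then (if v = last as then (1, - hd as) else (1, succ_in as v))
     else if - v \<in> set as then (if - v = last as then (1, hd as) else (1, - succ_in as (- v)))
     else (1, v))"

definition eps_op :: "nat \<Rightarrow> bool \<Rightarrow> complex \<Rightarrow> cmat" where
  "eps_op N od e = basis_op N od (\<lambda>v. if v = 0 then (e, 0) else (1, v))"

definition listprod :: "nat \<Rightarrow> bool \<Rightarrow> cmat list \<Rightarrow> cmat" where
  "listprod N od ms = foldr (mmul N od) ms (Imat N od)"

end

theory Submission
  imports Defs "HOL-Computational_Algebra.Fundamental_Theorem_Algebra"
begin

text \<open>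
  The normaliser conjugates the regular element diag(c) of \<hh> (eigenvalue c on e_c) into \<hh>,
  so it permutes the eigenlines of diag(c): every g in it is monomial, e_c \<mapsto> \<mu>_c e_(\<sigma> c),
  and preserving B means \<sigma>(-c) = -\<sigma>(c) and \<mu>_(-c) = \<mu>_c\<inverse>. Such a signed permutation splits
  into signed cycles: the orbit of a > 0 first returns either to a, closing a pair of l-cycles
  on \<plusminus>a, or to -a, closing one 2l-cycle. Conjugation by signed scalings e_c \<mapsto> \<nu>_c e_(\<plusminus>c),
  which lie in the normaliser, moves each cycle onto positive indices and rescales it until only
  the product of the \<mu> along the cycle is left; an l-th root of it gives [l,\<lambda>]_+, a square root
  gives [l]_-. On e_0 an orthogonal monomial operator acts by \<plusminus>1.
\<close>

section \<open>Monomial operators\<close>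

definition mono_comp :: "(int \<Rightarrow> complex \<times> int) \<Rightarrow> (int \<Rightarrow> complex \<times> int) \<Rightarrow> int \<Rightarrow> complex \<times> int" where
  "mono_comp f g c = (fst (f (snd (g c))) * fst (g c), snd (f (snd (g c))))"

lemma finite_idx [simp]: "finite (idx N od)"
  by (simp add: idx_def)

lemma uminus_in_idx_iff [simp]: "- x \<in> idx N od \<longleftrightarrow> x \<in> idx N od"
  by (auto simp: idx_def)

lemma basis_op_cong:
  assumes "\<forall>c\<in>idx N od. f c = f' c"
  shows "basis_op N od f = basis_op N od f'"
  using assms by (auto simp: basis_op_def fun_eq_iff)

lemma basis_op_in_Mat [simp]: "basis_op N od f \<in> Mat N od"
  by (auto simp: Mat_def basis_op_def)

lemma Imat_eq_basis_op: "Imat N od = basis_op N od (\<lambda>c. (1, c))"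
  by (auto simp: Imat_def basis_op_def fun_eq_iff)

lemma mmul_basis_op_right:
  assumes "\<forall>c\<in>idx N od. snd (f c) \<in> idx N od"
  shows "mmul N od A (basis_op N od f) r c =
    (if c \<in> idx N od then A r (snd (f c)) * fst (f c) else 0)"
proof -
  have "mmul N od A (basis_op N od f) r c = (\<Sum>k\<in>idx N od.
      if k = snd (f c) then (if c \<in> idx N od then A r (snd (f c)) * fst (f c) else 0) else 0)"
    unfolding mmul_def basis_op_def by (intro sum.cong) auto
  then show ?thesis using assms by auto
qed

lemma mmul_basis_op:
  assumes "\<forall>c\<in>idx N od. snd (g c) \<in> idx N od"
  shows "mmul N od (basis_op N od f) (basis_op N od g) = basis_op N od (mono_comp f g)"
proof (intro ext)
  fix r c
  show "mmul N od (basis_op N od f) (basis_op N od g) r c = basis_op N od (mono_comp f g) r c"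
    unfolding mmul_basis_op_right[OF assms] using assms by (auto simp: basis_op_def mono_comp_def)
qed

lemma mmul_assoc: "mmul N od (mmul N od A B) C = mmul N od A (mmul N od B C)"
  unfolding mmul_def
  by (auto simp: fun_eq_iff sum_distrib_left sum_distrib_right mult.assoc intro: sum.swap)

lemma mmul_in_Mat: "A \<in> Mat N od \<Longrightarrow> B \<in> Mat N od \<Longrightarrow> mmul N od A B \<in> Mat N od"
  by (auto simp: Mat_def mmul_def)

lemma mmul_Imat_right: "A \<in> Mat N od \<Longrightarrow> mmul N od A (Imat N od) = A"
  by (auto simp: fun_eq_iff mmul_def Imat_def Mat_def if_distrib cong: if_cong)

lemma mmul_Imat_left:
  assumes "A \<in> Mat N od"
  shows "mmul N od (Imat N od) A = A"
proof (intro ext)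
  fix i j
  have "mmul N od (Imat N od) A i j = (\<Sum>k\<in>idx N od. if k = i then A i j else 0)"
    unfolding mmul_def Imat_def by (intro sum.cong) auto
  then show "mmul N od (Imat N od) A i j = A i j"
    using assms by (auto simp: Mat_def)
qed

lemma listprod_in_Mat: "\<forall>A\<in>set xs. A \<in> Mat N od \<Longrightarrow> listprod N od xs \<in> Mat N od"
  by (induction xs) (auto simp: listprod_def mmul_in_Mat Imat_eq_basis_op)

lemma listprod_append:
  assumes "\<forall>A\<in>set ys. A \<in> Mat N od"
  shows "listprod N od (xs @ ys) = mmul N od (listprod N od xs) (listprod N od ys)"
  using listprod_in_Mat[OF assms]
  by (induction xs) (simp_all add: listprod_def mmul_Imat_left mmul_assoc)

definition diag :: "nat \<Rightarrow> bool \<Rightarrow> (int \<Rightarrow> complex) \<Rightarrow> cmat" where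
  "diag N od x = basis_op N od (\<lambda>c. (x c, c))"

lemma hset_eq_diag: "hset N od = {diag N od x | x. \<forall>a. x (- a) = - x a}"
  unfolding hset_def diag_def basis_op_def by (auto simp: fun_eq_iff)

lemma mmul_diag_right:
  "mmul N od A (diag N od x) r c = (if c \<in> idx N od then A r c * x c else 0)"
  unfolding diag_def by (simp add: mmul_basis_op_right)

lemma mmul_diag_left:
  "mmul N od (diag N od x) A r c = (if r \<in> idx N od then x r * A r c else 0)"
proof -
  have "mmul N od (diag N od x) A r c =
      (\<Sum>k\<in>idx N od. if k = r then (if r \<in> idx N od then x r * A r c else 0) else 0)"
    unfolding mmul_def diag_def basis_op_def by (intro sum.cong) auto
  then show ?thesis by auto
qed

lemma bilinear_basis_op:
  assumes "\<forall>c\<in>idx N od. snd (f c) \<in> idx N od" "i \<in> idx N od" "j \<in> idx N od"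
  shows "(\<Sum>k\<in>idx N od. \<Sum>m\<in>idx N od. basis_op N od f k i * B k m * basis_op N od f m j)
        = fst (f i) * B (snd (f i)) (snd (f j)) * fst (f j)"
proof -
  have inner: "(\<Sum>m\<in>idx N od. basis_op N od f k i * B k m * basis_op N od f m j)
      = (\<Sum>m\<in>idx N od. if m = snd (f j) then basis_op N od f k i * B k (snd (f j)) * fst (f j) else 0)"
    for k unfolding basis_op_def using assms by (intro sum.cong) auto
  have "(\<Sum>k\<in>idx N od. \<Sum>m\<in>idx N od. basis_op N od f k i * B k m * basis_op N od f m j)
      = (\<Sum>k\<in>idx N od. basis_op N od f k i * B k (snd (f j)) * fst (f j))"
    unfolding inner using assms by simp
  also have "\<dots> = (\<Sum>k\<in>idx N od.
      if k = snd (f i) then fst (f i) * B (snd (f i)) (snd (f j)) * fst (f j) else 0)"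
    unfolding basis_op_def using assms by (intro sum.cong) auto
  finally show ?thesis using assms by simp
qed

section \<open>Orthogonal monomial operators and signed scalings\<close>

(* the monomial operators preserving B *)
definition orth_mono :: "(int \<Rightarrow> complex \<times> int) \<Rightarrow> bool" where
  "orth_mono f \<longleftrightarrow> (\<forall>c. fst (f c) \<noteq> 0 \<and> f (- c) = (inverse (fst (f c)), - snd (f c)))"

lemma orth_mono_mono_comp:
  assumes "orth_mono f" "orth_mono g"
  shows "orth_mono (mono_comp f g)"
  using assms by (simp add: orth_mono_def mono_comp_def)

lemma mono_comp_eq_uminus:
  assumes "orth_mono f" "orth_mono g" "orth_mono f'" "orth_mono g'"
    and "mono_comp f g x = mono_comp f' g' x"
  shows "mono_comp f g (- x) = mono_comp f' g' (- x)"
  using assms orth_mono_mono_comp[of f g] orth_mono_mono_comp[of f' g'] by (simp add: orth_mono_def)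

lemma orth_mono_uminus:
  assumes "orth_mono f"
  shows "f (- x) = (inverse (fst (f x)), - snd (f x))" "fst (f x) \<noteq> 0"
  using assms by (auto simp: orth_mono_def)

lemma orth_mono_zero:
  assumes "orth_mono f"
  shows "snd (f 0) = 0" "fst (f 0) \<in> {1, - 1}"
proof -
  have "snd (f 0) = - snd (f 0)" "fst (f 0) = inverse (fst (f 0))"
    using orth_mono_uminus(1)[OF assms, of 0] by (simp_all add: prod_eq_iff)
  moreover have "fst (f 0) \<noteq> 0" using orth_mono_uminus(2)[OF assms] .
  ultimately show "snd (f 0) = 0" "fst (f 0) \<in> {1, - 1}"
    by (simp, metis insert_iff right_inverse square_eq_1_iff)
qed

definition signed_scaling :: "(int \<Rightarrow> complex \<times> int) \<Rightarrow> bool" where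
  "signed_scaling h \<longleftrightarrow> orth_mono h \<and> (\<forall>c. \<bar>snd (h c)\<bar> = \<bar>c\<bar>)"

lemma abs_eq_imp_in_idx_iff: "\<bar>x\<bar> = \<bar>y\<bar> \<Longrightarrow> x \<in> idx N od \<longleftrightarrow> y \<in> idx N od"
  by (metis abs_if uminus_in_idx_iff)

lemma signed_scaling_involution:
  assumes "signed_scaling h"
  shows "snd (h (snd (h c))) = c"
proof -
  have h: "\<bar>snd (h c)\<bar> = \<bar>c\<bar>" "snd (h (- c)) = - snd (h c)"
    using assms by (auto simp: signed_scaling_def orth_mono_def)
  then consider "snd (h c) = c" | "snd (h c) = - c" by arith
  then show ?thesis
  proof cases
    case 2
    then show ?thesis using h(2) by simp
  qed simp
qed

lemma signed_scaling_idx: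
  assumes "signed_scaling h"
  shows "\<forall>c\<in>idx N od. snd (h c) \<in> idx N od"
  using assms abs_eq_imp_in_idx_iff unfolding signed_scaling_def by blast

definition scaling_inv :: "(int \<Rightarrow> complex \<times> int) \<Rightarrow> int \<Rightarrow> complex \<times> int" where
  "scaling_inv h c = (inverse (fst (h (snd (h c)))), snd (h c))"

lemma is_inv_signed_scaling:
  assumes h: "signed_scaling h"
  shows "is_inv N od (basis_op N od h) (basis_op N od (scaling_inv h))"
proof -
  have "mono_comp h (scaling_inv h) = (\<lambda>c. (1, c))" "mono_comp (scaling_inv h) h = (\<lambda>c. (1, c))"
    using h signed_scaling_involution[OF h]
    by (simp_all add: fun_eq_iff mono_comp_def scaling_inv_def signed_scaling_def orth_mono_def)
  moreover have "\<forall>c\<in>idx N od. snd (scaling_inv h c) \<in> idx N od"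
    using signed_scaling_idx[OF h] by (simp add: scaling_inv_def)
  ultimately show ?thesis
    unfolding is_inv_def Imat_eq_basis_op by (simp add: mmul_basis_op signed_scaling_idx[OF h])
qed

lemma signed_scaling_in_Orth:
  assumes h: "signed_scaling h"
  shows "basis_op N od h \<in> Orth N od"
proof -
  have neg: "h (- c) = (inverse (fst (h c)), - snd (h c))" "fst (h c) \<noteq> 0" for c
    using h by (auto simp: signed_scaling_def orth_mono_def)
  have "(\<Sum>k\<in>idx N od. \<Sum>m\<in>idx N od. basis_op N od h k i * Bmat N od k m * basis_op N od h m j)
      = Bmat N od i j" if "i \<in> idx N od" "j \<in> idx N od" for i j
  proof -
    have "snd (h i) = - snd (h j) \<longleftrightarrow> i = - j"
      using signed_scaling_involution[OF h] neg(1) by (metis snd_conv)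
    moreover have "fst (h (- j)) * fst (h j) = 1" using neg by simp
    ultimately show ?thesis
      using that signed_scaling_idx[OF h] by (simp add: bilinear_basis_op Bmat_def)
  qed
  moreover have "is_inv N od (basis_op N od h) (basis_op N od (scaling_inv h))"
    by (rule is_inv_signed_scaling[OF h])
  ultimately show ?thesis unfolding Orth_def by auto
qed

lemma conj_diag_signed_scaling:
  assumes h: "signed_scaling h"
  shows "mmul N od (mmul N od (basis_op N od h) (diag N od x)) (basis_op N od (scaling_inv h))
    = diag N od (\<lambda>c. x (snd (h c)))"
proof -
  have "mono_comp (mono_comp h (\<lambda>c. (x c, c))) (scaling_inv h) = (\<lambda>c. (x (snd (h c)), c))"
    using h signed_scaling_involution[OF h]
    by (simp add: fun_eq_iff mono_comp_def scaling_inv_def signed_scaling_def orth_mono_def)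
  moreover have "\<forall>c\<in>idx N od. snd (scaling_inv h c) \<in> idx N od"
    using signed_scaling_idx[OF h] by (simp add: scaling_inv_def)
  ultimately show ?thesis
    unfolding diag_def using signed_scaling_idx[OF h] by (simp add: mmul_basis_op)
qed

lemma signed_scaling_in_NormO:
  assumes h: "signed_scaling h"
  shows "basis_op N od h \<in> NormO N od"
proof -
  let ?conj = "\<lambda>H. mmul N od (mmul N od (basis_op N od h) H) (basis_op N od (scaling_inv h))"
  have odd: "snd (h (- c)) = - snd (h c)" for c
    using h by (simp add: signed_scaling_def orth_mono_def)
  have "?conj ` hset N od = hset N od"
  proof (intro equalityI subsetI)
    fix H assume "H \<in> ?conj ` hset N od"
    then show "H \<in> hset N od" using odd by (auto simp: hset_eq_diag conj_diag_signed_scaling[OF h])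
  next
    fix H assume "H \<in> hset N od"
    then obtain y where y: "\<forall>a. y (- a) = - y a" "H = diag N od y" by (auto simp: hset_eq_diag)
    then have "H = ?conj (diag N od (\<lambda>c. y (snd (h c))))"
      using signed_scaling_involution[OF h] by (simp add: conj_diag_signed_scaling[OF h])
    moreover have "diag N od (\<lambda>c. y (snd (h c))) \<in> hset N od"
      using y odd by (auto simp: hset_eq_diag)
    ultimately show "H \<in> ?conj ` hset N od" by blast
  qed
  then show ?thesis
    using signed_scaling_in_Orth[OF h] is_inv_signed_scaling[OF h] unfolding NormO_def by blast
qed

section \<open>The normaliser consists of orthogonal monomial operators\<close>

(* The eigenvalues of diag(of_int) are distinct, so g\<inverse> diag(of_int) g \<in> \<hh> forces every
   column of g to be an eigenvector of diag(of_int), supported in a single row. *)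
lemma NormO_column_eigenvalue:
  assumes "g \<in> NormO N od"
  obtains x :: "int \<Rightarrow> complex" where "\<forall>r\<in>idx N od. \<forall>c\<in>idx N od. g r c \<noteq> 0 \<longrightarrow> x c = of_int r"
proof -
  from assms obtain g' where gM: "g \<in> Mat N od" and inv: "is_inv N od g g'"
    and img: "(\<lambda>H. mmul N od (mmul N od g H) g') ` hset N od = hset N od"
    unfolding NormO_def Orth_def by blast
  define D where "D = diag N od of_int"
  have "D \<in> hset N od" unfolding hset_eq_diag D_def by auto
  then have "D \<in> (\<lambda>H. mmul N od (mmul N od g H) g') ` hset N od" using img by simp
  then obtain x where eq: "mmul N od (mmul N od g (diag N od x)) g' = D"
    by (auto simp: hset_eq_diag)
  have "mmul N od D g = mmul N od (mmul N od g (diag N od x)) (mmul N od g' g)"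
    by (simp add: eq[symmetric] mmul_assoc)
  also have "\<dots> = mmul N od g (diag N od x)"
    using inv gM by (simp add: is_inv_def mmul_Imat_right mmul_in_Mat diag_def)
  finally have comm: "mmul N od D g = mmul N od g (diag N od x)" .
  have "x c = of_int r" if "r \<in> idx N od" "c \<in> idx N od" "g r c \<noteq> 0" for r c
  proof -
    have "of_int r * g r c = g r c * x c"
      using fun_cong[OF fun_cong[OF comm, of r], of c] that
      by (simp add: D_def mmul_diag_left mmul_diag_right)
    then show ?thesis using that(3) by simp
  qed
  then show ?thesis using that by blast
qed

lemma left_inverse_column_nonzero:
  assumes "mmul N od g' g = Imat N od" "c \<in> idx N od"
  shows "\<exists>r\<in>idx N od. g r c \<noteq> 0"
proof (rule ccontr)
  assume "\<not> ?thesis"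
  then have "mmul N od g' g c c = 0" unfolding mmul_def by simp
  then show False using assms by (simp add: Imat_def)
qed

lemma Mat_single_entry_columns_imp_basis_op:
  assumes "g \<in> Mat N od" "\<forall>c\<in>idx N od. \<exists>!r. r \<in> idx N od \<and> g r c \<noteq> 0"
  obtains f where "g = basis_op N od f" "\<forall>c\<in>idx N od. snd (f c) \<in> idx N od"
    "\<forall>c. c \<notin> idx N od \<longrightarrow> f c = (1, c)"
proof -
  define \<sigma> where "\<sigma> c = (THE r. r \<in> idx N od \<and> g r c \<noteq> 0)" for c
  define f where "f c = (if c \<in> idx N od then (g (\<sigma> c) c, \<sigma> c) else (1, c))" for c
  have \<sigma>: "\<sigma> c \<in> idx N od \<and> g (\<sigma> c) c \<noteq> 0" if "c \<in> idx N od" for c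
  proof -
    have "\<exists>!r. r \<in> idx N od \<and> g r c \<noteq> 0" using assms(2) that by blast
    then show ?thesis unfolding \<sigma>_def by (rule theI')
  qed
  have "r = \<sigma> c" if "r \<in> idx N od" "c \<in> idx N od" "g r c \<noteq> 0" for r c
    using assms(2) \<sigma> that by blast
  then have "g = basis_op N od f"
    using assms(1) by (auto simp: fun_eq_iff basis_op_def f_def Mat_def)
  moreover have "\<forall>c\<in>idx N od. snd (f c) \<in> idx N od"
    using \<sigma> by (simp add: f_def)
  ultimately show ?thesis using that by (simp add: f_def)
qed

lemma basis_op_left_invertible_imp_inj_on:
  assumes inv: "mmul N od g' (basis_op N od f) = Imat N od"
    and fI: "\<forall>c\<in>idx N od. snd (f c) \<in> idx N od"
  shows "inj_on (\<lambda>c. snd (f c)) (idx N od)"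
proof (rule inj_onI, rule ccontr)
  fix c1 c2
  assume c: "c1 \<in> idx N od" "c2 \<in> idx N od" "snd (f c1) = snd (f c2)" "c1 \<noteq> c2"
  have m: "mmul N od g' (basis_op N od f) r c = g' r (snd (f c)) * fst (f c)" if "c \<in> idx N od" for r c
    using that by (simp add: mmul_basis_op_right fI)
  have I: "mmul N od g' (basis_op N od f) r c = (if r = c then 1 else 0)"
    if "r \<in> idx N od" "c \<in> idx N od" for r c
    using inv that by (simp add: Imat_def)
  have "g' c2 (snd (f c2)) * fst (f c1) = 0" "g' c2 (snd (f c2)) * fst (f c2) = 1"
    "g' c1 (snd (f c1)) * fst (f c1) = 1"
    using I[of c2 c1] m[of c1 c2] I[of c2 c2] m[of c2 c2] I[of c1 c1] m[of c1 c1] c by simp_all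
  then show False by (metis mult_eq_0_iff zero_neq_one)
qed

lemma basis_op_in_Orth_imp_uminus:
  assumes "basis_op N od f \<in> Orth N od" "\<forall>c\<in>idx N od. snd (f c) \<in> idx N od" "c \<in> idx N od"
  shows "fst (f c) \<noteq> 0 \<and> f (- c) = (inverse (fst (f c)), - snd (f c))"
proof -
  have "(\<Sum>k\<in>idx N od. \<Sum>m\<in>idx N od. basis_op N od f k c * Bmat N od k m * basis_op N od f m (- c))
      = Bmat N od c (- c)"
    using assms unfolding Orth_def by auto
  then have "fst (f c) * Bmat N od (snd (f c)) (snd (f (- c))) * fst (f (- c)) = 1"
    using assms by (simp add: bilinear_basis_op Bmat_def)
  then have "snd (f (- c)) = - snd (f c)" "fst (f c) * fst (f (- c)) = 1"
    by (auto simp: Bmat_def split: if_splits)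
  then show ?thesis by (auto simp: prod_eq_iff inverse_unique)
qed

lemma NormO_imp_basis_op:
  assumes g: "g \<in> NormO N od"
  obtains f where "g = basis_op N od f" "orth_mono f" "inj (\<lambda>c. snd (f c))"
    "\<forall>c\<in>idx N od. snd (f c) \<in> idx N od"
proof -
  let ?I = "idx N od"
  from g obtain g' where gO: "g \<in> Orth N od" and inv: "mmul N od g' g = Imat N od"
    unfolding NormO_def is_inv_def by blast
  obtain x :: "int \<Rightarrow> complex" where x: "\<forall>r\<in>?I. \<forall>c\<in>?I. g r c \<noteq> 0 \<longrightarrow> x c = of_int r"
    by (rule NormO_column_eigenvalue[OF g])
  have gM: "g \<in> Mat N od" using gO by (simp add: Orth_def)
  have "\<forall>c\<in>?I. \<exists>!r. r \<in> ?I \<and> g r c \<noteq> 0"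
  proof (intro ballI ex_ex1I)
    fix c assume c: "c \<in> ?I"
    show "\<exists>r. r \<in> ?I \<and> g r c \<noteq> 0" using left_inverse_column_nonzero[OF inv c] by blast
    fix r r' assume "r \<in> ?I \<and> g r c \<noteq> 0" "r' \<in> ?I \<and> g r' c \<noteq> 0"
    then have "x c = of_int r" "x c = of_int r'" using x c by auto
    then show "r = r'" by simp
  qed
  then obtain f where geq: "g = basis_op N od f" and fI: "\<forall>c\<in>?I. snd (f c) \<in> ?I"
    and out: "\<forall>c. c \<notin> ?I \<longrightarrow> f c = (1, c)"
    by (rule Mat_single_entry_columns_imp_basis_op[OF gM])
  have "fst (f c) \<noteq> 0 \<and> f (- c) = (inverse (fst (f c)), - snd (f c))" for c
  proof (cases "c \<in> ?I")
    case True
    then show ?thesis using basis_op_in_Orth_imp_uminus[OF gO[unfolded geq] fI] by blast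
  next
    case False
    then show ?thesis using out by simp
  qed
  then have "orth_mono f" by (simp add: orth_mono_def)
  moreover have "inj (\<lambda>c. snd (f c))"
  proof (rule injI)
    fix c c' assume eq: "snd (f c) = snd (f c')"
    have "inj_on (\<lambda>c. snd (f c)) ?I"
      using basis_op_left_invertible_imp_inj_on[OF inv[unfolded geq] fI] .
    then show "c = c'"
      using eq fI out by (cases "c \<in> ?I"; cases "c' \<in> ?I") (auto dest: inj_onD)
  qed
  ultimately show ?thesis using that geq fI by blast
qed

definition plus_minus :: "int set \<Rightarrow> int set" where
  "plus_minus A = A \<union> uminus ` A"

lemma uminus_in_plus_minus_iff [simp]: "- x \<in> plus_minus A \<longleftrightarrow> x \<in> plus_minus A"
  unfolding plus_minus_def by (auto simp: image_iff) (metis minus_minus)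

lemma plus_minus_Un: "plus_minus (A \<union> B) = plus_minus A \<union> plus_minus B"
  unfolding plus_minus_def by auto

lemma plus_minus_Diff: "A \<subseteq> {0<..} \<Longrightarrow> B \<subseteq> {0<..} \<Longrightarrow> plus_minus (A - B) = plus_minus A - plus_minus B"
  unfolding plus_minus_def by (auto simp: subset_iff) fastforce+

lemma plus_minus_disjoint:
  "A \<subseteq> {0<..} \<Longrightarrow> B \<subseteq> {0<..} \<Longrightarrow> A \<inter> B = {} \<Longrightarrow> plus_minus A \<inter> plus_minus B = {}"
  unfolding plus_minus_def by force

lemma plus_minus_subset_idx: "A \<subseteq> {1..int N} \<Longrightarrow> plus_minus A \<subseteq> idx N od"
  unfolding plus_minus_def idx_def by force

lemma plus_minus_atLeastAtMost: "plus_minus {1..int N} = idx N od - {0}"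
  unfolding plus_minus_def idx_def by (auto simp: image_iff)

definition mono_supported :: "int set \<Rightarrow> (int \<Rightarrow> complex \<times> int) \<Rightarrow> bool" where
  "mono_supported A f \<longleftrightarrow> (\<forall>x. x \<notin> A \<longrightarrow> f x = (1, x)) \<and> (\<forall>x\<in>A. snd (f x) \<in> A)"

lemma mono_comp_supported_disjoint:
  assumes "mono_supported A f" "mono_supported B g" "A \<inter> B = {}"
  shows "mono_comp f g x = (if x \<in> A then f x else g x)"
  using assms by (cases "x \<in> B") (auto simp: mono_supported_def mono_comp_def prod_eq_iff)

lemma mono_comp_local:
  assumes "snd (f x) \<in> A" "x \<in> A" "\<forall>y\<in>A. h y = h' y \<and> T y = T' y" "snd (h' x) \<in> A"
  shows "mono_comp h f x = mono_comp h' f x" "mono_comp T h x = mono_comp T' h' x"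
  using assms by (simp_all add: mono_comp_def)

fun mono_patch :: "(int set \<times> (int \<Rightarrow> complex \<times> int)) list \<Rightarrow> int \<Rightarrow> complex \<times> int" where
  "mono_patch [] x = (1, x)"
| "mono_patch ((A, f) # bs) x = (if x \<in> A then f x else mono_patch bs x)"

lemma mono_patch_append:
  "mono_patch (bs @ bs') x = (if x \<in> \<Union> (fst ` set bs) then mono_patch bs x else mono_patch bs' x)"
  by (induction bs x rule: mono_patch.induct) auto

lemma mono_supported_mono_patch:
  "\<forall>(A, f) \<in> set bs. mono_supported A f \<Longrightarrow> mono_supported (\<Union> (fst ` set bs)) (mono_patch bs)"
proof (induction bs)
  case (Cons b bs)
  then show ?case by (cases b) (auto simp: mono_supported_def)
qed (simp add: mono_supported_def)

lemma mono_patch_preserves: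
  "\<forall>(A, f) \<in> set bs. \<forall>c\<in>C. snd (f c) \<in> C \<Longrightarrow> c \<in> C \<Longrightarrow> snd (mono_patch bs c) \<in> C"
proof (induction bs)
  case (Cons b bs)
  then show ?case by (cases b) auto
qed simp

lemma listprod_mono_patch:
  assumes "\<forall>(A, f) \<in> set bs. mono_supported A f \<and> (\<forall>c\<in>idx N od. snd (f c) \<in> idx N od)"
    and "sorted_wrt (\<lambda>b b'. fst b \<inter> fst b' = {}) bs"
  shows "listprod N od (map (\<lambda>(A, f). basis_op N od f) bs) = basis_op N od (mono_patch bs)"
  using assms
proof (induction bs)
  case Nil
  then show ?case by (simp add: listprod_def Imat_eq_basis_op)
next
  case (Cons b bs)
  obtain A f where b: "b = (A, f)" by fastforce
  have sup: "mono_supported (\<Union> (fst ` set bs)) (mono_patch bs)"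
    using Cons.prems by (intro mono_supported_mono_patch) auto
  have "\<forall>c\<in>idx N od. snd (mono_patch bs c) \<in> idx N od"
    using Cons.prems(1) by (intro ballI mono_patch_preserves) auto
  then have "listprod N od (map (\<lambda>(A, f). basis_op N od f) (b # bs))
      = basis_op N od (mono_comp f (mono_patch bs))"
    using Cons by (simp add: b listprod_def mmul_basis_op)
  also have "mono_comp f (mono_patch bs) = mono_patch (b # bs)"
  proof -
    have "mono_supported A f" "A \<inter> \<Union> (fst ` set bs) = {}"
      using Cons.prems by (auto simp: b)
    then show ?thesis using mono_comp_supported_disjoint[OF _ sup] by (simp add: b fun_eq_iff)
  qed
  finally show ?case .
qed

lemma signed_scaling_in_plus_minus: "signed_scaling h \<Longrightarrow> y \<in> plus_minus B \<Longrightarrow> snd (h y) \<in> plus_minus B"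
  unfolding signed_scaling_def by (metis abs_if uminus_in_plus_minus_iff)

lemma signed_scaling_patch:
  assumes "signed_scaling h" "signed_scaling h'"
  shows "signed_scaling (\<lambda>x. if x \<in> plus_minus B then h x else h' x)"
  using assms by (simp add: signed_scaling_def orth_mono_def)

section \<open>The operators of the normal form\<close>

definition phase :: "int list \<Rightarrow> complex" where
  "phase as = exp (\<i> * complex_of_real (pi * (real (length as) - 1) / real (length as)))"

definition plus_fun :: "int list \<Rightarrow> complex \<Rightarrow> int \<Rightarrow> complex \<times> int" where
  "plus_fun as c = (\<lambda>v.
     if - v \<in> set as then (phase as * c, - succ_in as (- v))
     else if v \<in> set as then (inverse (phase as) * inverse c, succ_in as v)
     else (1, v))"

definition minus_fun :: "int list \<Rightarrow> int \<Rightarrow> complex \<times> int" where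
  "minus_fun as = (\<lambda>v.
     if v \<in> set as then (if v = last as then (1, - hd as) else (1, succ_in as v))
     else if - v \<in> set as then (if - v = last as then (1, hd as) else (1, - succ_in as (- v)))
     else (1, v))"

definition eps_fun :: "complex \<Rightarrow> int \<Rightarrow> complex \<times> int" where
  "eps_fun e = (\<lambda>v. if v = 0 then (e, 0) else (1, v))"

lemma plus_op_eq: "plus_op N od as c = basis_op N od (plus_fun as c)"
proof -
  have "exp (- \<i> * z) = inverse (exp (\<i> * z))" for z
    by (metis exp_minus mult_minus_left)
  then show ?thesis unfolding plus_op_def plus_fun_def phase_def Let_def by (simp only:)
qed

lemma minus_op_eq: "minus_op N od as = basis_op N od (minus_fun as)"
  unfolding minus_op_def minus_fun_def ..

lemma eps_op_eq: "eps_op N od e = basis_op N od (eps_fun e)"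
  unfolding eps_op_def eps_fun_def ..

lemma succ_in_in_set:
  assumes "a \<in> set as"
  shows "succ_in as a \<in> set as"
proof -
  have "map_of (zip as (rotate1 as)) a \<noteq> None"
    using assms by (simp add: map_of_eq_None_iff) (metis length_rotate1 map_fst_zip set_map)
  then obtain y where y: "map_of (zip as (rotate1 as)) a = Some y" by blast
  then have "(a, y) \<in> set (zip as (rotate1 as))" by (rule map_of_SomeD)
  then have "y \<in> set as" by (auto dest: set_zip_rightD)
  then show ?thesis using y by (simp add: succ_in_def)
qed

lemma succ_in_nth:
  assumes "distinct as" "i < length as"
  shows "succ_in as (as ! i) = as ! (Suc i mod length as)"
  using assms by (simp add: succ_in_def map_of_zip_nth nth_rotate1)

lemma uminus_notin_positive:
  assumes "set as \<subseteq> {0<..}" "y \<in> set as"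
  shows "- y \<notin> set (as :: int list)"
proof
  assume "- y \<in> set as"
  with assms have "0 < y" "0 < - y" by auto
  then show False by simp
qed

lemma mono_supported_plus_fun: "mono_supported (plus_minus (set as)) (plus_fun as c)"
  unfolding mono_supported_def plus_fun_def plus_minus_def
  by (auto simp: succ_in_in_set image_iff)

lemma mono_supported_minus_fun: "mono_supported (plus_minus (set as)) (minus_fun as)"
  unfolding mono_supported_def minus_fun_def plus_minus_def
  by (cases "as = []") (auto simp: succ_in_in_set image_iff, metis last_in_set minus_minus)

lemma mono_supported_eps_fun: "mono_supported {0} (eps_fun e)"
  by (simp add: mono_supported_def eps_fun_def)

lemma orth_mono_plus_fun:
  assumes "set as \<subseteq> {0<..}" "c \<noteq> 0"
  shows "orth_mono (plus_fun as c)"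
  unfolding orth_mono_def plus_fun_def
  using uminus_notin_positive[OF assms(1)] assms(2) by (auto simp: phase_def)

lemma orth_mono_minus_fun:
  assumes "set as \<subseteq> {0<..}"
  shows "orth_mono (minus_fun as)"
  unfolding orth_mono_def minus_fun_def
  using uminus_notin_positive[OF assms] by auto

lemma plus_fun_nth:
  assumes "distinct as" "set as \<subseteq> {0<..}" "i < length as"
  shows "plus_fun as c (as ! i) = (inverse (phase as) * inverse c, as ! (Suc i mod length as))"
  using assms uminus_notin_positive[OF assms(2), of "as ! i"]
  by (simp add: plus_fun_def succ_in_nth)

lemma minus_fun_nth:
  assumes "distinct as" "i < length as"
  shows "minus_fun as (as ! i) = (1, if Suc i = length as then - hd as else as ! Suc i)"
proof -
  have "as ! i = as ! (length as - 1) \<longleftrightarrow> i = length as - 1"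
    using assms by (intro nth_eq_iff_index_eq) auto
  moreover have "last as = as ! (length as - 1)"
    using assms by (intro last_conv_nth) auto
  ultimately have "as ! i = last as \<longleftrightarrow> Suc i = length as"
    using assms by auto
  then show ?thesis using assms by (simp add: minus_fun_def succ_in_nth hd_conv_nth)
qed

definition blocks :: "(int list \<times> complex) list \<Rightarrow> int list list \<Rightarrow> (int set \<times> (int \<Rightarrow> complex \<times> int)) list" where
  "blocks P M = map (\<lambda>(as, c). (plus_minus (set as), plus_fun as c)) P @ map (\<lambda>as. (plus_minus (set as), minus_fun as)) M"

definition block_partition :: "(int list \<times> complex) list \<Rightarrow> int list list \<Rightarrow> int set \<Rightarrow> bool" where
  "block_partition P M S \<longleftrightarrow> (\<forall>(as, c) \<in> set P. as \<noteq> [] \<and> c \<noteq> 0) \<and> (\<forall>as \<in> set M. as \<noteq> []) \<and>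
     distinct (concat (map fst P @ M)) \<and> set (concat (map fst P @ M)) = S"

lemma mono_supported_blocks: "\<forall>(A, f) \<in> set (blocks P M). mono_supported A f"
  by (auto simp: blocks_def mono_supported_plus_fun mono_supported_minus_fun)

lemma map_fst_blocks: "map fst (blocks P M) = map (\<lambda>as. plus_minus (set as)) (map fst P @ M)"
  by (induction P) (auto simp: blocks_def)

lemma sorted_wrt_disjoint_plus_minus:
  assumes "distinct (concat ass)" "set (concat ass) \<subseteq> {0<..}"
  shows "sorted_wrt (\<lambda>A B. A \<inter> B = {}) (map (\<lambda>as. plus_minus (set as)) ass)"
  using assms
proof (induction ass)
  case (Cons as ass)
  have "plus_minus (set as) \<inter> plus_minus (set bs) = {}" if "bs \<in> set ass" for bs
    using Cons.prems that by (intro plus_minus_disjoint) auto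
  then show ?case using Cons by simp
qed simp

lemma mono_patch_blocks_Cons_plus:
  "mono_patch (blocks ((as, c) # P) M) x = (if x \<in> plus_minus (set as) then plus_fun as c x else mono_patch (blocks P M) x)"
  by (simp add: blocks_def)

lemma mono_patch_blocks_Cons_minus:
  assumes "plus_minus (set as) \<inter> plus_minus (set (concat (map fst P))) = {}"
  shows "mono_patch (blocks P (as # M)) x = (if x \<in> plus_minus (set as) then minus_fun as x else mono_patch (blocks P M) x)"
proof -
  have "\<Union> (fst ` set (map (\<lambda>(as, c). (plus_minus (set as), plus_fun as c)) P)) = plus_minus (set (concat (map fst P)))"
    unfolding plus_minus_def by force
  then show ?thesis using assms by (auto simp: blocks_def mono_patch_append)
qed

lemma normal_form_blocks_preserve_idx:
  assumes "set (concat (map fst P @ M)) \<subseteq> {1..int N}"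
  shows "\<forall>(A, f) \<in> set (({0}, eps_fun e) # blocks P M).
    mono_supported A f \<and> (\<forall>c\<in>idx N od. snd (f c) \<in> idx N od)"
proof (intro ballI, clarify)
  fix A f assume Af: "(A, f) \<in> set (({0}, eps_fun e) # blocks P M)"
  then have sup: "mono_supported A f"
    using mono_supported_blocks[of P M] mono_supported_eps_fun by fastforce
  have "A = {0} \<or> A \<in> set (map fst (blocks P M))" using Af by force
  then consider "A = {0}" | as where "as \<in> set (map fst P @ M)" "A = plus_minus (set as)"
    unfolding map_fst_blocks by auto
  then have "A = {0} \<or> A \<subseteq> idx N od"
  proof cases
    case 2
    then have "set as \<subseteq> {1..int N}" using assms by auto
    then show ?thesis using 2 plus_minus_subset_idx by blast
  qed simp
  then show "mono_supported A f \<and> (\<forall>c\<in>idx N od. snd (f c) \<in> idx N od)"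
    using sup unfolding mono_supported_def by (metis singletonD snd_conv subsetD)
qed

lemma normal_form_eq_basis_op:
  assumes "set (concat (map fst P @ M)) \<subseteq> {1..int N}" "distinct (concat (map fst P @ M))"
  shows "mmul N od (eps_op N od e)
           (mmul N od (listprod N od (map (\<lambda>(as, c). plus_op N od as c) P))
                      (listprod N od (map (minus_op N od) M)))
         = basis_op N od (mono_patch (({0}, eps_fun e) # blocks P M))"
proof -
  let ?bs = "({0}, eps_fun e) # blocks P M"
  have "set (concat (map fst P @ M)) \<subseteq> {0<..}" using assms(1) by auto
  then have "sorted_wrt (\<lambda>A B. A \<inter> B = {}) (map fst (blocks P M))"
    unfolding map_fst_blocks by (rule sorted_wrt_disjoint_plus_minus[OF assms(2)])
  moreover have "0 \<notin> A" if "A \<in> set (map fst (blocks P M))" for A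
    using that assms(1) unfolding map_fst_blocks by (force simp: plus_minus_def)
  ultimately have "sorted_wrt (\<lambda>b b'. fst b \<inter> fst b' = {}) ?bs"
    by (auto simp: sorted_wrt_map)
  with normal_form_blocks_preserve_idx[OF assms(1)]
  have "listprod N od (map (\<lambda>(A, f). basis_op N od f) ?bs) = basis_op N od (mono_patch ?bs)"
    by (rule listprod_mono_patch)
  moreover have "map (\<lambda>(A, f). basis_op N od f) ?bs = eps_op N od e #
      map (\<lambda>(as, c). plus_op N od as c) P @ map (minus_op N od) M"
    by (auto simp: blocks_def eps_op_eq plus_op_eq minus_op_eq)
  moreover have "listprod N od (map (\<lambda>(as, c). plus_op N od as c) P @ map (minus_op N od) M)
      = mmul N od (listprod N od (map (\<lambda>(as, c). plus_op N od as c) P))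
                  (listprod N od (map (minus_op N od) M))"
    by (rule listprod_append) (auto simp: minus_op_eq)
  ultimately show ?thesis by (simp add: listprod_def)
qed

section \<open>Signed cycles\<close>

lemma funpow_uminus:
  fixes \<sigma> :: "int \<Rightarrow> int"
  assumes "\<And>x. \<sigma> (- x) = - \<sigma> x"
  shows "(\<sigma> ^^ i) (- x) = - (\<sigma> ^^ i) x"
  using assms by (induction i) simp_all

lemma funpow_in_invariant: "\<sigma> ` X \<subseteq> X \<Longrightarrow> a \<in> X \<Longrightarrow> (\<sigma> ^^ i) a \<in> X"
  by (induction i) auto

lemma inj_finite_invariant_funpow_return:
  assumes "inj \<sigma>" "finite X" "\<sigma> ` X \<subseteq> X" "a \<in> X"
  shows "\<exists>k>0. (\<sigma> ^^ k) a = a"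
proof -
  have "range (\<lambda>i. (\<sigma> ^^ i) a) \<subseteq> X" using funpow_in_invariant[OF assms(3,4)] by auto
  then have "\<not> inj (\<lambda>i. (\<sigma> ^^ i) a)"
    using assms(2) finite_subset finite_imageD infinite_UNIV_nat by blast
  then obtain i j where ij: "i < j" "(\<sigma> ^^ i) a = (\<sigma> ^^ j) a"
    unfolding inj_def by (metis linorder_neqE_nat)
  then have "(\<sigma> ^^ i) a = (\<sigma> ^^ i) ((\<sigma> ^^ (j - i)) a)"
    by (metis funpow_add le_add_diff_inverse less_imp_le o_apply)
  then have "a = (\<sigma> ^^ (j - i)) a" using inj_fn[OF assms(1), of i] by (metis injD)
  then show ?thesis using ij by (intro exI[of _ "j - i"]) auto
qed

lemma inj_invariant_Diff:
  assumes "inj \<sigma>" "finite B" "\<sigma> ` B \<subseteq> B" "\<sigma> ` A \<subseteq> A"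
  shows "\<sigma> ` (A - B) \<subseteq> A - B"
proof -
  have "\<sigma> ` B = B" using assms(1-3) by (intro endo_inj_surj) (auto simp: inj_on_def dest: injD)
  then show ?thesis using assms(1,4) by (auto dest: injD)
qed

lemma signed_orbit_return:
  fixes \<sigma> :: "int \<Rightarrow> int"
  assumes inj: "inj \<sigma>" and odd: "\<And>x. \<sigma> (- x) = - \<sigma> x"
    and "finite X" "\<sigma> ` X \<subseteq> X" "a \<in> X"
  obtains l where "0 < l" "(\<sigma> ^^ l) a \<in> {a, - a}"
    "\<And>i j. i < l \<Longrightarrow> j < l \<Longrightarrow> \<bar>(\<sigma> ^^ i) a\<bar> = \<bar>(\<sigma> ^^ j) a\<bar> \<Longrightarrow> i = j"
proof -
  let ?R = "\<lambda>k. 0 < k \<and> (\<sigma> ^^ k) a \<in> {a, - a}"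
  define l where "l = (LEAST k. ?R k)"
  have "\<exists>k. ?R k" using inj_finite_invariant_funpow_return[OF inj assms(3-5)] by auto
  then have l: "?R l" unfolding l_def by (rule LeastI_ex)
  have first: "\<not> ?R k" if "k < l" for k using not_less_Least[of k ?R] that by (simp add: l_def)
  have "i = j" if ij: "i < j" "j < l" "\<bar>(\<sigma> ^^ i) a\<bar> = \<bar>(\<sigma> ^^ j) a\<bar>" for i j
  proof -
    define b where "b = (\<sigma> ^^ (j - i)) a"
    have "(\<sigma> ^^ j) a = (\<sigma> ^^ i) b"
      using ij unfolding b_def by (metis funpow_add le_add_diff_inverse less_imp_le o_apply)
    with ij(3) have "(\<sigma> ^^ i) a = (\<sigma> ^^ i) b \<or> (\<sigma> ^^ i) a = (\<sigma> ^^ i) (- b)"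
      unfolding funpow_uminus[of \<sigma>, OF odd] by arith
    then have "a = b \<or> a = - b" using inj_fn[OF inj, of i] by (auto dest: injD)
    then have "?R (j - i)" using ij(1) by (auto simp: b_def)
    moreover have "j - i < l" using ij by simp
    ultimately show ?thesis using first by blast
  qed
  then have "i = j" if "i < l" "j < l" "\<bar>(\<sigma> ^^ i) a\<bar> = \<bar>(\<sigma> ^^ j) a\<bar>" for i j
    using that by (metis linorder_neqE_nat)
  then show ?thesis using that l by blast
qed

(* Rescaling the basis along a cycle by w turns the coefficients m i into m i * w (Suc i) / w i.
   Only their product is invariant; closing the cycle needs w l = w 0 (return to a),
   resp. w l = 1 / w 0 (return to -a). *)
lemma cycle_scaling_plus:
  fixes m :: "nat \<Rightarrow> complex"
  assumes "0 < l" "\<forall>i<l. m i \<noteq> 0"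
  obtains k w where "k \<noteq> 0" "\<forall>i\<le>l. w i \<noteq> 0" "\<forall>i<l. m i * w (Suc i) = k * w i" "w l = w 0"
proof -
  define \<Pi> where "\<Pi> i = (\<Prod>j<i. m j)" for i
  have \<Pi>: "\<Pi> i \<noteq> 0" if "i \<le> l" for i using assms(2) that by (simp add: \<Pi>_def)
  obtain k where k: "k ^ l = \<Pi> l" using nth_root_exists[OF assms(1)] by blast
  then have "k \<noteq> 0" using \<Pi>[of l] assms(1) by (auto simp: zero_power)
  define w where "w i = k ^ i / \<Pi> i" for i
  have "\<forall>i\<le>l. w i \<noteq> 0" using \<open>k \<noteq> 0\<close> \<Pi> by (simp add: w_def)
  moreover have "\<forall>i<l. m i * w (Suc i) = k * w i"
    using \<Pi> assms(2) by (simp add: w_def \<Pi>_def field_simps)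
  moreover have "w l = w 0" using k \<Pi>[of l] by (simp add: w_def \<Pi>_def)
  ultimately show ?thesis using that \<open>k \<noteq> 0\<close> by blast
qed

lemma cycle_scaling_minus:
  fixes m :: "nat \<Rightarrow> complex"
  assumes "\<forall>i<l. m i \<noteq> 0"
  obtains w where "\<forall>i\<le>l. w i \<noteq> 0" "\<forall>i<l. m i * w (Suc i) = w i" "w l = inverse (w 0)"
proof -
  define \<Pi> where "\<Pi> i = (\<Prod>j<i. m j)" for i
  have \<Pi>: "\<Pi> i \<noteq> 0" if "i \<le> l" for i using assms that by (simp add: \<Pi>_def)
  obtain z where z: "z ^ 2 = \<Pi> l" using nth_root_exists[of 2] by auto
  then have "z \<noteq> 0" using \<Pi>[of l] by auto
  have "\<Pi> 0 = 1" by (simp add: \<Pi>_def)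
  define w where "w i = z / \<Pi> i" for i
  have "\<forall>i\<le>l. w i \<noteq> 0" using \<open>z \<noteq> 0\<close> \<Pi> by (simp add: w_def)
  moreover have "\<forall>i<l. m i * w (Suc i) = w i"
    using \<Pi> assms by (simp add: w_def \<Pi>_def field_simps)
  moreover have "w l = inverse (w 0)"
    using z \<open>z \<noteq> 0\<close> \<open>\<Pi> 0 = 1\<close> \<Pi>[of l] by (simp add: w_def power2_eq_square field_simps)
  ultimately show ?thesis using that by blast
qed

locale signed_cycle =
  fixes f :: "int \<Rightarrow> complex \<times> int" and a :: int and l :: nat
  assumes orth: "orth_mono f" and a_pos: "0 < a" and l_pos: "0 < l"
    and return: "((\<lambda>x. snd (f x)) ^^ l) a \<in> {a, - a}"
    and abs_inj: "\<And>i j. i < l \<Longrightarrow> j < l \<Longrightarrow>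
      \<bar>((\<lambda>x. snd (f x)) ^^ i) a\<bar> = \<bar>((\<lambda>x. snd (f x)) ^^ j) a\<bar> \<Longrightarrow> i = j"
begin

definition orb :: "nat \<Rightarrow> int" where
  "orb i = ((\<lambda>x. snd (f x)) ^^ i) a"

definition cyc :: "int list" where
  "cyc = map (\<lambda>i. \<bar>orb i\<bar>) [0..<l]"

lemma orb_0 [simp]: "orb 0 = a"
  by (simp add: orb_def)

lemma orb_Suc: "orb (Suc i) = snd (f (orb i))"
  by (simp add: orb_def)

lemma orb_return: "orb l = a \<or> orb l = - a"
  using return by (simp add: orb_def)

lemma orb_abs_inj: "i < l \<Longrightarrow> j < l \<Longrightarrow> \<bar>orb i\<bar> = \<bar>orb j\<bar> \<Longrightarrow> i = j"
  using abs_inj by (simp add: orb_def)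

lemma orb_nonzero:
  assumes "i \<le> l"
  shows "orb i \<noteq> 0"
proof
  assume "orb i = 0"
  then have "orb (i + k) = 0" for k
    using orth_mono_zero(1)[OF orth] by (induction k) (simp_all add: orb_Suc)
  then have "orb l = 0" using assms by (metis le_add_diff_inverse)
  then show False using orb_return a_pos by auto
qed

lemma uminus_notin_orbit: "x \<in> orb ` {..<l} \<Longrightarrow> - x \<notin> orb ` {..<l}"
proof
  assume "x \<in> orb ` {..<l}" "- x \<in> orb ` {..<l}"
  then obtain i j where ij: "i < l" "j < l" "x = orb i" "- x = orb j" by auto
  then have "i = j" using orb_abs_inj by (metis abs_minus_cancel)
  then show False using ij orb_nonzero[of i] by simp
qed

lemma a_in_orbit: "a \<in> orb ` {..<l}"
  using l_pos by (metis orb_0 image_eqI lessThan_iff)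

lemma inj_on_orb: "inj_on orb {..<l}"
  by (rule inj_onI) (auto intro: orb_abs_inj)

lemma length_cyc [simp]: "length cyc = l"
  by (simp add: cyc_def)

lemma nth_cyc: "i < l \<Longrightarrow> cyc ! i = \<bar>orb i\<bar>"
  by (simp add: cyc_def)

lemma cyc_ne_Nil: "cyc \<noteq> []"
  using l_pos length_cyc by (metis list.size(3) less_irrefl)

lemma distinct_cyc: "distinct cyc"
  by (auto simp: distinct_conv_nth nth_cyc dest: orb_abs_inj)

lemma cyc_positive: "set cyc \<subseteq> {0<..}"
  using orb_nonzero by (auto simp: cyc_def)

lemma hd_cyc: "hd cyc = a"
  using cyc_ne_Nil l_pos a_pos by (simp add: hd_conv_nth nth_cyc)

lemma a_in_set_cyc: "a \<in> set cyc"
  using hd_cyc cyc_ne_Nil by (metis hd_in_set)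

lemma set_cyc_subset:
  assumes "S \<subseteq> {0<..}" "\<forall>x\<in>plus_minus S. snd (f x) \<in> plus_minus S" "a \<in> S"
  shows "set cyc \<subseteq> S"
proof -
  have "\<bar>x\<bar> \<in> S" if "x \<in> plus_minus S" for x using that assms(1) unfolding plus_minus_def by auto
  moreover have "orb i \<in> plus_minus S" for i
    unfolding orb_def using assms(2,3) by (intro funpow_in_invariant) (auto simp: plus_minus_def)
  ultimately show ?thesis by (auto simp: cyc_def)
qed

lemma plus_minus_set_cyc: "plus_minus (set cyc) = orb ` {..<l} \<union> uminus ` orb ` {..<l}"
proof -
  have abs_iff: "(x = \<bar>y\<bar> \<or> x = - \<bar>y\<bar>) \<longleftrightarrow> (x = y \<or> x = - y)" for x y :: int by arith
  have "x \<in> plus_minus (set cyc) \<longleftrightarrow> (\<exists>i<l. x = \<bar>orb i\<bar> \<or> x = - \<bar>orb i\<bar>)" for x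
    unfolding plus_minus_def cyc_def by (auto simp: image_iff minus_equation_iff)
  also have "\<dots>x \<longleftrightarrow> (\<exists>i<l. x = orb i \<or> x = - orb i)" for x by (simp only: abs_iff)
  finally show ?thesis by (auto simp: image_iff minus_equation_iff)
qed

lemma snd_f_in_plus_minus_set_cyc:
  assumes "x \<in> plus_minus (set cyc)"
  shows "snd (f x) \<in> plus_minus (set cyc)"
proof -
  have "orb (Suc i) \<in> plus_minus (set cyc)" if "i < l" for i
  proof (cases "Suc i < l")
    case False
    then have "Suc i = l" using that by simp
    then show ?thesis using orb_return a_in_orbit unfolding plus_minus_set_cyc by auto
  qed (auto simp: plus_minus_set_cyc)
  moreover have "snd (f (- y)) = - snd (f y)" for y by (simp add: orth_mono_uminus[OF orth])
  moreover obtain i where "i < l" "x = orb i \<or> x = - orb i"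
    using assms unfolding plus_minus_set_cyc by auto
  ultimately show ?thesis by (auto simp: orb_Suc[symmetric])
qed

definition cyc_scaling :: "(nat \<Rightarrow> complex) \<Rightarrow> int \<Rightarrow> complex \<times> int" where
  "cyc_scaling w x =
     (if x \<in> orb ` {..<l} then (w (inv_into {..<l} orb x), \<bar>x\<bar>)
      else if - x \<in> orb ` {..<l} then (inverse (w (inv_into {..<l} orb (- x))), - \<bar>x\<bar>)
      else (1, x))"

lemma cyc_scaling_orb: "i < l \<Longrightarrow> cyc_scaling w (orb i) = (w i, \<bar>orb i\<bar>)"
  using inj_on_orb by (simp add: cyc_scaling_def)

lemma cyc_scaling_return:
  "cyc_scaling w (orb l) = (if orb l = a then (w 0, a) else (inverse (w 0), - a))"
proof -
  have a: "cyc_scaling w a = (w 0, a)" using cyc_scaling_orb[of 0] l_pos a_pos by simp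
  have "cyc_scaling w (- a) = (inverse (w 0), - a)"
    using a a_in_orbit uminus_notin_orbit[OF a_in_orbit] by (simp add: cyc_scaling_def)
  then show ?thesis using a orb_return a_pos by auto
qed

lemma signed_scaling_cyc_scaling:
  assumes "\<forall>i<l. w i \<noteq> 0"
  shows "signed_scaling (cyc_scaling w)"
proof -
  have "w (inv_into {..<l} orb x) \<noteq> 0" if "x \<in> orb ` {..<l}" for x
    using assms that by (auto simp: inv_into_f_f[OF inj_on_orb])
  then show ?thesis using uminus_notin_orbit
    unfolding signed_scaling_def orth_mono_def cyc_scaling_def by auto
qed

lemma mono_comp_cyc_scaling:
  assumes w: "\<forall>i\<le>l. w i \<noteq> 0"
    and twist: "\<forall>i<l. fst (f (orb i)) * w (Suc i) = k * w i"
    and w_return: "w l = (if orb l = a then w 0 else inverse (w 0))"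
    and F: "orth_mono F" "\<forall>i<l. F (cyc ! i) = (k, if Suc i = l then orb l else cyc ! Suc i)"
    and x: "x \<in> plus_minus (set cyc)"
  shows "mono_comp (cyc_scaling w) f x = mono_comp F (cyc_scaling w) x"
proof -
  let ?h = "cyc_scaling w"
  have h_Suc: "?h (orb (Suc i)) = (w (Suc i), if Suc i = l then orb l else cyc ! Suc i)" if "i < l" for i
  proof (cases "Suc i < l")
    case True
    then show ?thesis by (simp add: cyc_scaling_orb nth_cyc)
  next
    case False
    then have "Suc i = l" using that by simp
    then show ?thesis using cyc_scaling_return w_return orb_return a_pos by auto
  qed
  have on_orbit: "mono_comp ?h f (orb i) = mono_comp F ?h (orb i)" if "i < l" for i
    using h_Suc[OF that] twist F(2) that
    by (simp add: mono_comp_def orb_Suc[symmetric] cyc_scaling_orb nth_cyc[symmetric] mult.commute)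
  have orth_h: "orth_mono ?h"
    using signed_scaling_cyc_scaling w by (simp add: signed_scaling_def)
  obtain i where "i < l" "x = orb i \<or> x = - orb i"
    using x unfolding plus_minus_set_cyc by auto
  then show ?thesis
    using on_orbit mono_comp_eq_uminus[OF orth_h orth F(1) orth_h] by auto
qed

(* A return to a closes a pair of l-cycles, a [l,\<lambda>]_+ block; a return to -a
   closes a single 2l-cycle, a [l]_- block. *)
lemma cycle_block:
  obtains F h where "F = minus_fun cyc \<or> (\<exists>c. c \<noteq> 0 \<and> F = plus_fun cyc c)" "signed_scaling h"
    "\<forall>x\<in>plus_minus (set cyc). mono_comp h f x = mono_comp F h x"
proof -
  define m where "m i = fst (f (orb i))" for i
  have m: "\<forall>i<l. m i \<noteq> 0" using orth_mono_uminus(2)[OF orth] by (simp add: m_def)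
  consider (plus) "orb l = a" | (minus) "orb l = - a" "orb l \<noteq> a" using orb_return by blast
  then show ?thesis
  proof cases
    case plus
    obtain k w where k: "k \<noteq> 0" "\<forall>i\<le>l. w i \<noteq> 0" "\<forall>i<l. m i * w (Suc i) = k * w i" "w l = w 0"
      using cycle_scaling_plus[OF l_pos m] .
    define c where "c = inverse (phase cyc * k)"
    have "phase cyc \<noteq> 0" by (simp add: phase_def)
    then have c: "c \<noteq> 0" "inverse (phase cyc) * inverse c = k" using k(1) by (simp_all add: c_def)
    have F: "\<forall>i<l. plus_fun cyc c (cyc ! i) = (k, if Suc i = l then orb l else cyc ! Suc i)"
      using plus_fun_nth[OF distinct_cyc cyc_positive, of _ c] c(2) plus l_pos a_pos
      by (auto simp: nth_cyc)
    have "mono_comp (cyc_scaling w) f x = mono_comp (plus_fun cyc c) (cyc_scaling w) x"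
      if "x \<in> plus_minus (set cyc)" for x
      by (rule mono_comp_cyc_scaling[OF k(2) _ _ orth_mono_plus_fun[OF cyc_positive c(1)] F that])
        (use k(3,4) plus in \<open>simp_all add: m_def\<close>)
    moreover have "signed_scaling (cyc_scaling w)" using k(2) by (intro signed_scaling_cyc_scaling) simp
    ultimately show ?thesis using that c(1) by blast
  next
    case minus
    obtain w where w: "\<forall>i\<le>l. w i \<noteq> 0" "\<forall>i<l. m i * w (Suc i) = w i" "w l = inverse (w 0)"
      using cycle_scaling_minus[OF m] .
    have F: "\<forall>i<l. minus_fun cyc (cyc ! i) = (1, if Suc i = l then orb l else cyc ! Suc i)"
      using minus_fun_nth[OF distinct_cyc] hd_cyc minus by simp
    have "mono_comp (cyc_scaling w) f x = mono_comp (minus_fun cyc) (cyc_scaling w) x"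
      if "x \<in> plus_minus (set cyc)" for x
      by (rule mono_comp_cyc_scaling[OF w(1) _ _ orth_mono_minus_fun[OF cyc_positive] F that])
        (use w(2,3) minus in \<open>simp_all add: m_def\<close>)
    moreover have "signed_scaling (cyc_scaling w)" using w(1) by (intro signed_scaling_cyc_scaling) simp
    ultimately show ?thesis using that by blast
  qed
qed

lemma extend_block_partition:
  assumes F: "F = minus_fun cyc \<or> (\<exists>c. c \<noteq> 0 \<and> F = plus_fun cyc c)"
    and S': "S' \<inter> set cyc = {}" "S' \<subseteq> {0<..}" and P'M': "block_partition P' M' S'"
  obtains P M where "block_partition P M (set cyc \<union> S')"
    "\<forall>y. mono_patch (blocks P M) y = (if y \<in> plus_minus (set cyc) then F y else mono_patch (blocks P' M') y)"
proof (cases "F = minus_fun cyc")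
  case True
  have "plus_minus (set cyc) \<inter> plus_minus (set (concat (map fst P'))) = {}"
    using S' P'M' cyc_positive by (intro plus_minus_disjoint) (auto simp: block_partition_def)
  then have "\<forall>y. mono_patch (blocks P' (cyc # M')) y =
      (if y \<in> plus_minus (set cyc) then F y else mono_patch (blocks P' M') y)"
    using True by (simp add: mono_patch_blocks_Cons_minus)
  moreover have "block_partition P' (cyc # M') (set cyc \<union> S')"
    using P'M' S'(1) distinct_cyc cyc_ne_Nil unfolding block_partition_def by auto
  ultimately show ?thesis using that by blast
next
  case False
  then obtain c where "c \<noteq> 0" "F = plus_fun cyc c" using F by blast
  then show ?thesis
    using that[of "(cyc, c) # P'" M'] P'M' S'(1) distinct_cyc cyc_ne_Nil
    by (auto simp: block_partition_def mono_patch_blocks_Cons_plus)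
qed

lemma extend_decomposition:
  assumes S': "S' \<inter> set cyc = {}" "S' \<subseteq> {0<..}"
    and P'M': "block_partition P' M' S'" "signed_scaling h'"
      "\<forall>x\<in>plus_minus S'. mono_comp h' f x = mono_comp (mono_patch (blocks P' M')) h' x"
    and closed: "\<forall>x\<in>plus_minus S'. snd (f x) \<in> plus_minus S'"
  shows "\<exists>P M h. block_partition P M (set cyc \<union> S') \<and> signed_scaling h \<and>
    (\<forall>x\<in>plus_minus (set cyc \<union> S'). mono_comp h f x = mono_comp (mono_patch (blocks P M)) h x)"
proof -
  obtain F h1 where F: "F = minus_fun cyc \<or> (\<exists>c. c \<noteq> 0 \<and> F = plus_fun cyc c)"
    and h1: "signed_scaling h1" "\<forall>x\<in>plus_minus (set cyc). mono_comp h1 f x = mono_comp F h1 x"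
    by (rule cycle_block)
  obtain P M where PM: "block_partition P M (set cyc \<union> S')"
    and T: "\<forall>y. mono_patch (blocks P M) y =
      (if y \<in> plus_minus (set cyc) then F y else mono_patch (blocks P' M') y)"
    using extend_block_partition[OF F S' P'M'(1)] by blast
  have disj: "plus_minus (set cyc) \<inter> plus_minus S' = {}"
    using S' cyc_positive by (intro plus_minus_disjoint) auto
  define h where "h x = (if x \<in> plus_minus (set cyc) then h1 x else h' x)" for x
  have "mono_comp h f x = mono_comp (mono_patch (blocks P M)) h x" if x: "x \<in> plus_minus (set cyc \<union> S')" for x
  proof (cases "x \<in> plus_minus (set cyc)")
    case True
    have "\<forall>y\<in>plus_minus (set cyc). h y = h1 y \<and> mono_patch (blocks P M) y = F y"
      using T by (simp add: h_def)
    from mono_comp_local[where f = f and x = x, OF snd_f_in_plus_minus_set_cyc[OF True] True this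
        signed_scaling_in_plus_minus[OF h1(1) True]]
    show ?thesis using h1(2) True by simp
  next
    case False
    then have x': "x \<in> plus_minus S'" using x by (simp add: plus_minus_Un)
    have "\<forall>y\<in>plus_minus S'. h y = h' y \<and> mono_patch (blocks P M) y = mono_patch (blocks P' M') y"
      using disj T by (auto simp: h_def)
    from mono_comp_local[where f = f and x = x, OF closed[rule_format, OF x'] x' this
        signed_scaling_in_plus_minus[OF P'M'(2) x']]
    show ?thesis using P'M'(3) x' by simp
  qed
  then show ?thesis
    using PM signed_scaling_patch[OF h1(1) P'M'(2)] unfolding h_def by blast
qed

end

section \<open>The normal form\<close>

lemma signed_cycle_decomposition:
  assumes orth: "orth_mono f" and inj: "inj (\<lambda>x. snd (f x))"
    and "finite S" "S \<subseteq> {0<..}" "\<forall>x\<in>plus_minus S. snd (f x) \<in> plus_minus S"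
  shows "\<exists>P M h. block_partition P M S \<and> signed_scaling h \<and>
    (\<forall>x\<in>plus_minus S. mono_comp h f x = mono_comp (mono_patch (blocks P M)) h x)"
  using assms(3-5)
proof (induction "card S" arbitrary: S rule: less_induct)
  case less
  let ?\<sigma> = "\<lambda>x. snd (f x)"
  have fin: "finite S" and pos: "S \<subseteq> {0<..}" and closed: "\<forall>x\<in>plus_minus S. ?\<sigma> x \<in> plus_minus S"
    using less.prems by auto
  show ?case
  proof (cases "S = {}")
    case True
    have "signed_scaling (\<lambda>x. (1, x))" by (simp add: signed_scaling_def orth_mono_def)
    then show ?thesis using True
      by (intro exI[of _ "[]"] exI[of _ "[]"]) (auto simp: block_partition_def plus_minus_def mono_comp_def)
  next
    case False
    then obtain a where aS: "a \<in> S" by blast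
    have odd: "?\<sigma> (- x) = - ?\<sigma> x" for x by (simp add: orth_mono_uminus[OF orth])
    have fin_plus_minus: "finite (plus_minus S)" using fin by (simp add: plus_minus_def)
    have a_plus_minus: "a \<in> plus_minus S" using aS by (simp add: plus_minus_def)
    obtain l where l: "0 < l" "(?\<sigma> ^^ l) a \<in> {a, - a}"
      "\<And>i j. i < l \<Longrightarrow> j < l \<Longrightarrow> \<bar>(?\<sigma> ^^ i) a\<bar> = \<bar>(?\<sigma> ^^ j) a\<bar> \<Longrightarrow> i = j"
      using signed_orbit_return[of ?\<sigma>, OF inj odd fin_plus_minus _ a_plus_minus] closed by blast
    interpret signed_cycle f a l
      using orth l aS pos by unfold_locales auto
    define S' where "S' = S - set cyc"
    have cyc_S: "set cyc \<subseteq> S" using set_cyc_subset[OF pos closed aS] .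
    have "?\<sigma> ` (plus_minus S - plus_minus (set cyc)) \<subseteq> plus_minus S - plus_minus (set cyc)"
      using snd_f_in_plus_minus_set_cyc closed fin
      by (intro inj_invariant_Diff[OF inj]) (auto simp: plus_minus_def)
    then have closed': "\<forall>x\<in>plus_minus S'. ?\<sigma> x \<in> plus_minus S'"
      unfolding S'_def using plus_minus_Diff[OF pos cyc_positive] by auto
    have "card S' < card S"
      unfolding S'_def using a_in_set_cyc aS fin by (intro psubset_card_mono) auto
    moreover have "finite S'" "S' \<subseteq> {0<..}" using fin pos by (auto simp: S'_def)
    ultimately obtain P' M' h' where "block_partition P' M' S'" "signed_scaling h'"
      "\<forall>x\<in>plus_minus S'. mono_comp h' f x = mono_comp (mono_patch (blocks P' M')) h' x"
      using less.hyps closed' by blast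
    moreover have "set cyc \<union> S' = S" using cyc_S by (auto simp: S'_def)
    ultimately show ?thesis
      using extend_decomposition[of S' P' M' h'] closed' \<open>S' \<subseteq> {0<..}\<close> by (auto simp: S'_def)
  qed
qed

lemma conj_in_Norm_basis_op:
  assumes h: "signed_scaling h"
    and f: "\<forall>c\<in>idx N od. snd (f c) \<in> idx N od" and T: "\<forall>c\<in>idx N od. snd (T c) \<in> idx N od"
    and conj: "\<forall>c\<in>idx N od. mono_comp h f c = mono_comp T h c"
  shows "conj_in_Norm N od (basis_op N od f) (basis_op N od T)"
proof -
  have hN: "basis_op N od h \<in> NormO N od" using h by (rule signed_scaling_in_NormO)
  then obtain h' where h': "is_inv N od (basis_op N od h) h'" unfolding NormO_def by blast
  have "mmul N od (basis_op N od h) (basis_op N od f) = mmul N od (basis_op N od T) (basis_op N od h)"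
    using conj basis_op_cong by (simp add: mmul_basis_op f signed_scaling_idx[OF h])
  then have "mmul N od (mmul N od (basis_op N od h) (basis_op N od f)) h'
      = mmul N od (basis_op N od T) (mmul N od (basis_op N od h) h')"
    by (simp add: mmul_assoc)
  also have "\<dots> = basis_op N od T"
    using h' by (simp add: is_inv_def mmul_Imat_right)
  finally show ?thesis using hN h' unfolding conj_in_Norm_def by blast
qed

lemma NormO_conj_normal_form:
  assumes g: "g \<in> NormO N od"
  shows "\<exists>e P M. e \<in> {1, - 1} \<and> block_partition P M {1..int N} \<and>
    conj_in_Norm N od g (basis_op N od (mono_patch (({0}, eps_fun e) # blocks P M)))"
proof -
  let ?I = "idx N od" and ?S = "{1..int N}"
  obtain f where geq: "g = basis_op N od f" and orth: "orth_mono f" and inj: "inj (\<lambda>c. snd (f c))"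
    and fI: "\<forall>c\<in>?I. snd (f c) \<in> ?I"
    by (rule NormO_imp_basis_op[OF g])
  have "snd (f x) \<noteq> 0" if "x \<noteq> 0" for x
    using that orth_mono_zero(1)[OF orth] inj by (metis injD)
  then have "\<forall>x\<in>plus_minus ?S. snd (f x) \<in> plus_minus ?S"
    using fI unfolding plus_minus_atLeastAtMost[of N od] by blast
  moreover have "?S \<subseteq> {0<..}" by auto
  ultimately obtain P M h where PM: "block_partition P M ?S" and h: "signed_scaling h"
    and conj: "\<forall>x\<in>plus_minus ?S. mono_comp h f x = mono_comp (mono_patch (blocks P M)) h x"
    using signed_cycle_decomposition[OF orth inj finite_atLeastAtMost_int] by blast
  define e where "e = fst (f 0)"
  define T where "T = mono_patch (({0}, eps_fun e) # blocks P M)"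
  have h0: "snd (h 0) = 0" using h by (simp add: signed_scaling_def orth_mono_zero)
  have "mono_comp h f c = mono_comp T h c" if "c \<in> ?I" for c
  proof (cases "c = 0")
    case True
    then show ?thesis
      using orth_mono_zero(1)[OF orth] h0 by (simp add: T_def mono_comp_def eps_fun_def e_def)
  next
    case False
    then have "snd (h c) \<noteq> 0" using h unfolding signed_scaling_def by (metis abs_eq_0)
    then show ?thesis using conj that False by (simp add: T_def mono_comp_def plus_minus_atLeastAtMost[of N od])
  qed
  moreover have "\<forall>c\<in>?I. snd (T c) \<in> ?I"
  proof -
    have "set (concat (map fst P @ M)) \<subseteq> ?S" using PM by (simp add: block_partition_def)
    from normal_form_blocks_preserve_idx[OF this, of e od]
    have "\<forall>(A, f) \<in> set (({0}, eps_fun e) # blocks P M). \<forall>c\<in>?I. snd (f c) \<in> ?I" by fast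
    then show ?thesis unfolding T_def by (blast intro: mono_patch_preserves)
  qed
  ultimately have "conj_in_Norm N od g (basis_op N od T)"
    unfolding geq using conj_in_Norm_basis_op[OF h fI] by blast
  then show ?thesis using orth_mono_zero(2)[OF orth] PM unfolding T_def e_def by blast
qed

lemma NormO_conj_product:
  assumes "g \<in> NormO N od"
  shows "\<exists>e P M. e \<in> {1, - 1} \<and> block_partition P M {1..int N} \<and>
    conj_in_Norm N od g (mmul N od (eps_op N od e)
      (mmul N od (listprod N od (map (\<lambda>(as, c). plus_op N od as c) P))
                 (listprod N od (map (minus_op N od) M))))"
  using NormO_conj_normal_form[OF assms] normal_form_eq_basis_op
  unfolding block_partition_def by (metis order_refl)

lemma eps_op_even: "eps_op N False e = Imat N False"
  unfolding eps_op_eq Imat_eq_basis_op by (rule basis_op_cong) (simp add: idx_def eps_fun_def)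

lemma NormO_even_conj_product:
  assumes "g \<in> NormO N False"
  shows "\<exists>P M. block_partition P M {1..int N} \<and>
    conj_in_Norm N False g (mmul N False (listprod N False (map (\<lambda>(as, c). plus_op N False as c) P))
                                        (listprod N False (map (minus_op N False) M)))"
proof -
  obtain e P M where "block_partition P M {1..int N}"
    "conj_in_Norm N False g (mmul N False (eps_op N False e)
      (mmul N False (listprod N False (map (\<lambda>(as, c). plus_op N False as c) P))
                    (listprod N False (map (minus_op N False) M))))"
    using NormO_conj_product[OF assms] by blast
  moreover have "mmul N False (listprod N False (map (\<lambda>(as, c). plus_op N False as c) P))
      (listprod N False (map (minus_op N False) M)) \<in> Mat N False"
    by (intro mmul_in_Mat listprod_in_Mat) (auto simp: plus_op_eq minus_op_eq)
  ultimately show ?thesis by (auto simp: eps_op_even mmul_Imat_left)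
qed

theorem mainTheorem1:
  shows "(\<forall>(N::nat) g. g \<in> NormO N False \<longrightarrow>
           (\<exists>(P :: (int list \<times> complex) list) (M :: int list list).
              (\<forall>(as, c) \<in> set P. as \<noteq> [] \<and> c \<noteq> 0) \<and> (\<forall>as \<in> set M. as \<noteq> []) \<and>
              distinct (concat (map fst P @ M)) \<and> set (concat (map fst P @ M)) = {1 .. int N} \<and>
              conj_in_Norm N False g
                (mmul N False (listprod N False (map (\<lambda>(as, c). plus_op N False as c) P))
                              (listprod N False (map (minus_op N False) M)))))
       \<and> (\<forall>(N::nat) g. g \<in> NormO N True \<longrightarrow>
           (\<exists>(e::complex) (P :: (int list \<times> complex) list) (M :: int list list).
              e \<in> {1, -1} \<and>
              (\<forall>(as, c) \<in> set P. as \<noteq> [] \<and> c \<noteq> 0) \<and> (\<forall>as \<in> set M. as \<noteq> []) \<and>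
              distinct (concat (map fst P @ M)) \<and> set (concat (map fst P @ M)) = {1 .. int N} \<and>
              conj_in_Norm N True g
                (mmul N True (eps_op N True e)
                   (mmul N True (listprod N True (map (\<lambda>(as, c). plus_op N True as c) P))
                                (listprod N True (map (minus_op N True) M))))))"
  apply (intro conjI allI impI)
  subgoal for N g using NormO_even_conj_product[of g N] by (simp add: block_partition_def conj_assoc)
  subgoal for N g using NormO_conj_product[of g N True] by (simp add: block_partition_def conj_assoc)
  done

end
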